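(* Let $X$ be as in the context. (1) If $\limsup_{x\to\infty}H_1(x)<1$, then there exist a positive function $f$ on $\mathbb S$ and $\epsilon>0$ such that $\lim_{x\to\infty}f(x)=\infty$, $\mathcal A f(x)<0$ for all sufficiently large $x\in\mathbb S$, and $$\limsup_{x\to\infty}\mathcal A f(x)\le-\Big(\frac{\epsilon}{2}\Big)^2\liminf_{x\to\infty}\frac{v(x)}{x^2(\log x)^{2-\epsilon/2}}\le 0.$$ (2) If $\liminf_{x\to\infty}H_1(x)>1$, then there exist a positive function $f$ on $\mathbb S$ and $\epsilon>0$ such that $\lim_{x\to\infty}f(x)=0$, $\mathcal A f(x)<0$ for all sufficiently large $x\in\mathbb S$, and $$\limsup_{x\to\infty}\mathcal A f(x)\le-\Big(\frac{\epsilon}{2}\Big)^2\liminf_{x\to\infty}\frac{v(x)}{x^2(\log x)^{2+\epsilon/2}}\le 0.$$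
   Context: Let $\mathbb S\subseteq\mathbb Z_{\ge0}$ be an infinite set and let $X$ be an irreducible continuous-time Markov chain on $\mathbb S$ whose generator acts on functions $f:\mathbb S\to\mathbb R$ by $\mathcal A f(x)=\sum_{\eta\in\mathbb Z}\lambda_\eta(x)\big(f(x+\eta)-f(x)\big)$, where $\lambda_\eta(x)$ is the rate of the jump $x\to x+\eta$ (and $\lambda_\eta(x)=0$ whenever $x+\eta\notin\mathbb S$). Standing assumption: (a) there is a finite set $\Gamma\subset\mathbb Z$ such that $\lambda_\eta\equiv0$ for $\eta\notin\Gamma$; (b) $0\le\lambda_\eta(x)<\infty$ for all $x,\eta$. Define $m(x)=\sum_{\eta}\eta\,\lambda_\eta(x)$, $v(x)=\frac12\sum_\eta\eta^2\lambda_\eta(x)$ (positive on $\mathbb S$ by irreducibility), and for a constant $p$ and $x>1$, $H_p(x)=\dfrac{(\log x)(m(x)x-p\,v(x))}{v(x)}$. All limits are as $x\to\infty$ along $\mathbb S$. *)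

theory Defs
  imports "HOL-Analysis.Analysis"
begin

text \<open>State space: a set S of non-negative integers. Rates: lam eta x is the rate of
the jump x -> x + eta. Gam is the finite set of possible jump sizes.\<close>

definition jump_rel :: "int set \<Rightarrow> (int \<Rightarrow> int \<Rightarrow> real) \<Rightarrow> (int \<times> int) set" where
  "jump_rel S lam = {(x, x + eta) | x eta. x \<in> S \<and> lam eta x > 0}"

definition irreducible_on :: "int set \<Rightarrow> (int \<Rightarrow> int \<Rightarrow> real) \<Rightarrow> bool" where
  "irreducible_on S lam \<longleftrightarrow> (\<forall>x\<in>S. \<forall>y\<in>S. (x, y) \<in> (jump_rel S lam)\<^sup>*)"

definition ctmc_rates :: "int set \<Rightarrow> int set \<Rightarrow> (int \<Rightarrow> int \<Rightarrow> real) \<Rightarrow> bool" where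
  "ctmc_rates S Gam lam \<longleftrightarrow>
     S \<subseteq> {0..} \<and> infinite S \<and> finite Gam \<and>
     (\<forall>eta x. 0 \<le> lam eta x) \<and>
     (\<forall>eta x. eta \<notin> Gam \<longrightarrow> lam eta x = 0) \<and>
     (\<forall>x\<in>S. \<forall>eta. x + eta \<notin> S \<longrightarrow> lam eta x = 0) \<and>
     irreducible_on S lam"

definition gen :: "int set \<Rightarrow> (int \<Rightarrow> int \<Rightarrow> real) \<Rightarrow> (int \<Rightarrow> real) \<Rightarrow> int \<Rightarrow> real" where
  "gen Gam lam f x = (\<Sum>eta\<in>Gam. lam eta x * (f (x + eta) - f x))"

definition drift :: "int set \<Rightarrow> (int \<Rightarrow> int \<Rightarrow> real) \<Rightarrow> int \<Rightarrow> real" where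
  "drift Gam lam x = (\<Sum>eta\<in>Gam. real_of_int eta * lam eta x)"

definition vv :: "int set \<Rightarrow> (int \<Rightarrow> int \<Rightarrow> real) \<Rightarrow> int \<Rightarrow> real" where
  "vv Gam lam x = (1/2) * (\<Sum>eta\<in>Gam. (real_of_int eta)^2 * lam eta x)"

definition HH :: "int set \<Rightarrow> (int \<Rightarrow> int \<Rightarrow> real) \<Rightarrow> real \<Rightarrow> int \<Rightarrow> real" where
  "HH Gam lam p x = ln (real_of_int x) * (drift Gam lam x * real_of_int x - p * vv Gam lam x)
                      / vv Gam lam x"

definition along :: "int set \<Rightarrow> int filter" where
  "along S = inf at_top (principal S)"

end

theory Submission
  imports Defs "HOL-Real_Asymp.Real_Asymp"
begin

text \<open>
  The test function is f(x) = (ln x) powr b, with b = \<epsilon>/2 for part (1) and b = -\<epsilon>/2 for part (2).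
  Since the jumps are bounded, a second-order Taylor expansion is uniform in the jump size and gives
  A f(x) = b (ln x) powr (b - 2) v(x) / x^2 * (H_1(x) + b - 1) + O(|b| v(x) / x^3).
  If H_1 stays below 1 - 4b (resp. above 1 + 4|b|), the main term is at most
  -3 b^2 v(x) / (x^2 (ln x) powr (2 - b)); as (ln x)^3 = o(x), the remainder eventually costs at most
  a third of this, leaving A f(x) \<le> -2 b^2 v(x) / (x^2 (ln x) powr (2 - b)).
\<close>

definition ln_powr_deriv1 :: "real \<Rightarrow> real \<Rightarrow> real" where
  "ln_powr_deriv1 b t = b * ln t powr (b - 1) / t"

definition ln_powr_deriv2 :: "real \<Rightarrow> real \<Rightarrow> real" where
  "ln_powr_deriv2 b t = b * ((b - 1) * ln t powr (b - 2) - ln t powr (b - 1)) / t^2"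

definition ln_powr_deriv3 :: "real \<Rightarrow> real \<Rightarrow> real" where
  "ln_powr_deriv3 b t =
     b * ((b - 1) * (b - 2) * ln t powr (b - 3) - 3 * (b - 1) * ln t powr (b - 2)
          + 2 * ln t powr (b - 1)) / t^3"

lemma has_real_derivative_ln_powr:
  "1 < t \<Longrightarrow> ((\<lambda>t. ln t powr b) has_real_derivative ln_powr_deriv1 b t) (at t)"
  unfolding ln_powr_deriv1_def by (rule derivative_eq_intros refl | simp)+

lemma has_real_derivative_ln_powr_deriv1:
  "1 < t \<Longrightarrow> (ln_powr_deriv1 b has_real_derivative ln_powr_deriv2 b t) (at t)"
  unfolding ln_powr_deriv1_def[abs_def] ln_powr_deriv2_def
  by (rule derivative_eq_intros refl | simp)+ (simp add: power2_eq_square algebra_simps)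

lemma has_real_derivative_ln_powr_deriv2:
  "1 < t \<Longrightarrow> (ln_powr_deriv2 b has_real_derivative ln_powr_deriv3 b t) (at t)"
  unfolding ln_powr_deriv2_def[abs_def] ln_powr_deriv3_def
  by (rule derivative_eq_intros refl | simp)+ (simp add: field_simps eval_nat_numeral)

lemma one_le_ln: "3 \<le> t \<Longrightarrow> 1 \<le> ln (t::real)"
  using exp_le by (subst ln_ge_iff) auto

lemma abs_ln_powr_deriv3_le:
  assumes b: "\<bar>b\<bar> \<le> 1" and t: "3 \<le> t"
  shows "\<bar>ln_powr_deriv3 b t\<bar> \<le> 14 * \<bar>b\<bar> / t^3"
proof -
  define L where "L = ln t"
  have L: "1 \<le> L" using one_le_ln[OF t] by (simp add: L_def)
  have powr_bounds: "0 \<le> L powr (b - k)" "L powr (b - k) \<le> 1" if "1 \<le> k" for k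
    using powr_mono[of "b - k" 0 L] L b that by auto
  have "\<bar>(b - 1) * (b - 2) * L powr (b - 3)\<bar> \<le> (2 * 3) * 1"
    unfolding abs_mult using b powr_bounds[of 3] by (intro mult_mono) auto
  moreover have "\<bar>3 * (b - 1) * L powr (b - 2)\<bar> \<le> (3 * 2) * 1"
    unfolding abs_mult using b powr_bounds[of 2] by (intro mult_mono) auto
  moreover have "\<bar>2 * L powr (b - 1)\<bar> \<le> 2"
    using powr_bounds[of 1] by simp
  ultimately have "\<bar>(b - 1) * (b - 2) * L powr (b - 3) - 3 * (b - 1) * L powr (b - 2) + 2 * L powr (b - 1)\<bar>
                   \<le> 14"
    by linarith
  then show ?thesis
    using t unfolding ln_powr_deriv3_def L_def[symmetric]
    by (simp add: abs_mult divide_right_mono mult_left_mono mult.commute)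
qed

lemma ln_powr_taylor_remainder_le:
  fixes x e b :: real
  assumes b: "\<bar>b\<bar> \<le> 1" and x: "2 * \<bar>e\<bar> + 3 \<le> x"
  shows "\<bar>ln (x + e) powr b - ln x powr b - ln_powr_deriv1 b x * e - ln_powr_deriv2 b x * e^2 / 2\<bar>
         \<le> 19 * \<bar>b\<bar> * \<bar>e\<bar>^3 / x^3"
proof (cases "e = 0")
  case False
  define diff where "diff m = [\<lambda>t. ln t powr b, ln_powr_deriv1 b, ln_powr_deriv2 b, ln_powr_deriv3 b] ! m"
    for m :: nat
  have "DERIV (diff m) t :> diff (Suc m) t" if "m < 3" "x - \<bar>e\<bar> \<le> t" for m t
  proof -
    have "1 < t" using that x by linarith
    with \<open>m < 3\<close> show ?thesis
      using has_real_derivative_ln_powr has_real_derivative_ln_powr_deriv1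
        has_real_derivative_ln_powr_deriv2
      by (auto simp: diff_def less_Suc_eq numeral_3_eq_3)
  qed
  then obtain t where t: "if x + e < x then x + e < t \<and> t < x else x < t \<and> t < x + e"
    and taylor: "diff 0 (x + e) = (\<Sum>m<3. diff m x / fact m * (x + e - x)^m) + diff 3 t / fact 3 * (x + e - x)^3"
    using Taylor[of 3 diff "diff 0" "x - \<bar>e\<bar>" "x + \<bar>e\<bar>" x "x + e"] False by force
  have remainder: "ln (x + e) powr b - ln x powr b - ln_powr_deriv1 b x * e - ln_powr_deriv2 b x * e^2 / 2
                   = ln_powr_deriv3 b t * e^3 / 6"
    using taylor by (simp add: diff_def eval_nat_numeral fact_numeral field_simps)
  have t3: "3 \<le> t" and "x / 2 \<le> t" using t x by (auto split: if_splits)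
  then have "x^3 \<le> 8 * t^3"
    using power_mono[of "x / 2" t 3] x by (simp add: power_divide mult.commute)
  then have "14 * \<bar>b\<bar> / t^3 \<le> 14 * \<bar>b\<bar> * 8 / x^3"
    using t3 x by (simp add: field_simps mult_left_mono)
  then have "\<bar>ln_powr_deriv3 b t\<bar> * \<bar>e\<bar>^3 / 6 \<le> (14 * \<bar>b\<bar> * 8 / x^3) * \<bar>e\<bar>^3 / 6"
    using abs_ln_powr_deriv3_le[OF b t3] by (intro divide_right_mono mult_right_mono) auto
  also have "\<dots> \<le> 19 * \<bar>b\<bar> * \<bar>e\<bar>^3 / x^3"
    using x by (simp add: field_simps)
  finally show ?thesis
    by (simp add: remainder abs_mult power_abs)
qed simp

definition ln_powr_fun :: "real \<Rightarrow> int \<Rightarrow> real" where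
  "ln_powr_fun b x = (if 3 \<le> x then ln (real_of_int x) powr b else 1)"

definition jump_bound :: "int set \<Rightarrow> real" where
  "jump_bound Gam = 1 + (\<Sum>eta\<in>Gam. \<bar>real_of_int eta\<bar>)"

lemma one_le_jump_bound: "1 \<le> jump_bound Gam"
  unfolding jump_bound_def by (simp add: sum_nonneg)

lemma abs_le_jump_bound: "finite Gam \<Longrightarrow> eta \<in> Gam \<Longrightarrow> \<bar>real_of_int eta\<bar> \<le> jump_bound Gam"
  unfolding jump_bound_def using member_le_sum[of eta Gam "\<lambda>e. \<bar>real_of_int e\<bar>"] by auto

lemma gen_ln_powr_fun_le:
  assumes fin: "finite Gam" and lam_nonneg: "\<And>eta. 0 \<le> lam eta x" and b: "\<bar>b\<bar> \<le> 1"
    and x: "2 * jump_bound Gam + 3 \<le> real_of_int x"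
  shows "gen Gam lam (ln_powr_fun b) x
         \<le> ln_powr_deriv1 b x * drift Gam lam x + ln_powr_deriv2 b x * vv Gam lam x
           + 38 * \<bar>b\<bar> * jump_bound Gam * vv Gam lam x / (real_of_int x)^3"
proof -
  let ?K = "jump_bound Gam" and ?x = "real_of_int x"
  let ?c = "19 * \<bar>b\<bar> * ?K / ?x^3"
  have jump: "lam eta x * (ln_powr_fun b (x + eta) - ln_powr_fun b x)
      \<le> lam eta x * (ln_powr_deriv1 b ?x * e + ln_powr_deriv2 b ?x * e^2 / 2 + ?c * e^2)"
    if "eta \<in> Gam" and e: "e = real_of_int eta" for eta e
  proof -
    have eta: "\<bar>e\<bar> \<le> ?K" using abs_le_jump_bound[OF fin that(1)] e by simp
    have "\<bar>e\<bar>^3 = \<bar>e\<bar> * e^2"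
      by (simp add: power3_eq_cube power2_eq_square)
    also have "\<dots> \<le> ?K * e^2"
      using eta by (simp add: mult_right_mono)
    finally have "19 * \<bar>b\<bar> * \<bar>e\<bar>^3 / ?x^3 \<le> ?c * e^2"
      using x one_le_jump_bound[of Gam]
      by (simp add: divide_right_mono mult_left_mono mult.assoc)
    moreover have "ln_powr_fun b (x + eta) - ln_powr_fun b x = ln (?x + e) powr b - ln ?x powr b"
      using x eta e one_le_jump_bound[of Gam] by (simp add: ln_powr_fun_def)
    ultimately show ?thesis
      using ln_powr_taylor_remainder_le[OF b, of e ?x] x eta lam_nonneg[of eta]
      by (intro mult_left_mono) auto
  qed
  have "gen Gam lam (ln_powr_fun b) x
        \<le> (\<Sum>eta\<in>Gam. lam eta x * (ln_powr_deriv1 b ?x * eta + ln_powr_deriv2 b ?x * (of_int eta)^2 / 2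
                                        + ?c * (of_int eta)^2))"
    unfolding gen_def by (intro sum_mono jump) simp_all
  also have "\<dots> = ln_powr_deriv1 b x * drift Gam lam x + ln_powr_deriv2 b x * vv Gam lam x
                  + 38 * \<bar>b\<bar> * jump_bound Gam * vv Gam lam x / (real_of_int x)^3"
    unfolding drift_def vv_def
    by (simp add: sum.distrib sum_distrib_left sum_divide_distrib algebra_simps)
  finally show ?thesis .
qed

lemma ln_powr_deriv_drift_vv:
  assumes "1 < real_of_int x" and "vv Gam lam x \<noteq> 0"
  shows "ln_powr_deriv1 b x * drift Gam lam x + ln_powr_deriv2 b x * vv Gam lam x
         = b * (HH Gam lam 1 x + b - 1) * vv Gam lam x
           / ((real_of_int x)^2 * ln (real_of_int x) powr (2 - b))"
proof -
  define L where "L = ln (real_of_int x)"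
  have L: "0 < L" using assms(1) by (simp add: L_def)
  have "L powr (b - 1) = L / L powr (2 - b)" and "L powr (b - 2) = 1 / L powr (2 - b)"
    using L by (simp_all add: powr_diff power2_eq_square)
  moreover have "0 < L powr (2 - b)" using L by simp
  ultimately show ?thesis
    using assms unfolding ln_powr_deriv1_def ln_powr_deriv2_def HH_def L_def[symmetric]
    by (simp add: field_simps power2_eq_square)
qed

lemma vv_pos:
  assumes ct: "ctmc_rates S Gam lam" and x: "x \<in> S"
  shows "0 < vv Gam lam x"
proof -
  have fin: "finite Gam" and lam_nonneg: "\<And>eta x. 0 \<le> lam eta x"
    and outside: "\<And>eta x. eta \<notin> Gam \<Longrightarrow> lam eta x = 0" and irr: "irreducible_on S lam"
    using ct unfolding ctmc_rates_def by auto
  obtain y where y: "y \<in> S" "y \<noteq> x"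
    using ct infinite_remove[of S x] unfolding ctmc_rates_def by (metis DiffE ex_in_conv finite.emptyI singletonI)
  have "(x, y) \<in> (jump_rel S lam - Id)\<^sup>*"
    using irr x y unfolding irreducible_on_def rtrancl_r_diff_Id by blast
  then obtain z where "(x, z) \<in> jump_rel S lam - Id"
    using y(2) by (cases rule: converse_rtranclE) auto
  then obtain eta where eta: "eta \<noteq> 0" "0 < lam eta x"
    unfolding jump_rel_def by auto
  then have "eta \<in> Gam" using outside by force
  have "0 < (real_of_int eta)^2 * lam eta x" using eta by simp
  also have "\<dots> \<le> (\<Sum>e\<in>Gam. (real_of_int e)^2 * lam e x)"
    by (rule member_le_sum[OF \<open>eta \<in> Gam\<close>]) (use lam_nonneg fin in auto)
  finally show ?thesis unfolding vv_def by simp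
qed

lemma gen_ln_powr_fun_le_neg:
  assumes ct: "ctmc_rates S Gam lam" and b: "\<bar>b\<bar> \<le> 1" and "x \<in> S"
    and x: "2 * jump_bound Gam + 3 \<le> real_of_int x"
    and ln_cube: "38 * jump_bound Gam * ln (real_of_int x) ^ 3 \<le> \<bar>b\<bar> * real_of_int x"
    and H: "b * (HH Gam lam 1 x - 1) \<le> - 4 * b^2"
  shows "gen Gam lam (ln_powr_fun b) x
         \<le> - 2 * b^2 * (vv Gam lam x / ((real_of_int x)^2 * ln (real_of_int x) powr (2 - b)))"
proof -
  let ?x = "real_of_int x" and ?K = "jump_bound Gam"
  define L where "L = ln ?x"
  define P where "P = L powr (2 - b)"
  define v where "v = vv Gam lam x"
  have x3: "3 \<le> ?x" using x one_le_jump_bound[of Gam] by linarith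
  have L: "1 \<le> L" unfolding L_def by (rule one_le_ln[OF x3])
  have P: "0 < P" unfolding P_def using L by simp
  have v: "0 < v" unfolding v_def by (rule vv_pos[OF ct \<open>x \<in> S\<close>])
  have "ln_powr_deriv1 b ?x * drift Gam lam x + ln_powr_deriv2 b ?x * v
        = b * (HH Gam lam 1 x + b - 1) * v / (?x^2 * P)"
    using ln_powr_deriv_drift_vv[of x Gam lam b] x3 v by (simp add: v_def P_def L_def)
  also have "\<dots> \<le> (- 3 * b^2) * v / (?x^2 * P)"
    using H v P x3
    by (intro divide_right_mono mult_right_mono) (auto simp: algebra_simps power2_eq_square)
  finally have drift_part: "ln_powr_deriv1 b ?x * drift Gam lam x + ln_powr_deriv2 b ?x * v
                            \<le> - 3 * b^2 * v / (?x^2 * P)" .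
  have "P \<le> L powr 3" unfolding P_def using L b by (intro powr_mono) auto
  then have "38 * ?K * P \<le> \<bar>b\<bar> * ?x"
    using ln_cube one_le_jump_bound[of Gam] L
    by (simp add: L_def powr_realpow order_trans[OF mult_left_mono])
  then have "(\<bar>b\<bar> * v / (?x^3 * P)) * (38 * ?K * P) \<le> (\<bar>b\<bar> * v / (?x^3 * P)) * (\<bar>b\<bar> * ?x)"
    using v P x3 by (intro mult_left_mono) auto
  then have error_part: "38 * \<bar>b\<bar> * ?K * v / ?x^3 \<le> b^2 * v / (?x^2 * P)"
    using P x3 by (simp add: field_simps power2_eq_square power3_eq_cube)
  have rates: "finite Gam" "\<And>eta. 0 \<le> lam eta x"
    using ct unfolding ctmc_rates_def by auto
  have "gen Gam lam (ln_powr_fun b) x \<le> - 3 * b^2 * v / (?x^2 * P) + b^2 * v / (?x^2 * P)"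
    using gen_ln_powr_fun_le[of Gam lam x, OF rates b x] drift_part error_part unfolding v_def by linarith
  also have "\<dots> = - 2 * b^2 * (v / (?x^2 * P))" by (simp add: field_simps)
  finally show ?thesis unfolding v_def P_def L_def .
qed

lemma along_neq_bot:
  assumes "S \<subseteq> {0..}" and "infinite S"
  shows "along S \<noteq> bot"
proof
  assume "along S = bot"
  then obtain N where "\<forall>x\<in>S. N \<le> x \<longrightarrow> False"
    unfolding trivial_limit_def along_def eventually_inf_principal eventually_at_top_linorder by auto
  then have "S \<subseteq> {0..N}" using assms(1) by force
  then show False using assms(2) finite_subset by blast
qed

lemma along_le_at_top: "along S \<le> at_top"
  unfolding along_def by simp

lemma eventually_in_along: "eventually (\<lambda>x. x \<in> S) (along S)"
  unfolding along_def by (simp add: eventually_inf_principal)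

lemma eventually_ge_real_of_int: "eventually (\<lambda>x::int. c \<le> real_of_int x) at_top"
  using filterlim_real_of_int_at_top by (simp add: filterlim_at_top)

lemma eventually_ln_cube_le:
  assumes "0 < c"
  shows "eventually (\<lambda>x::int. ln (real_of_int x) ^ 3 \<le> c * real_of_int x) at_top"
proof -
  have "eventually (\<lambda>y::real. ln y ^ 3 \<le> c * y) at_top"
    using assms by real_asymp
  then show ?thesis
    using filterlim_real_of_int_at_top unfolding filterlim_iff by blast
qed

lemma ln_powr_fun_pos: "0 < ln_powr_fun b x"
  by (simp add: ln_powr_fun_def)

lemma eventually_ln_powr_fun_eq: "eventually (\<lambda>x. ln_powr_fun b x = ln (real_of_int x) powr b) at_top"
  using eventually_ge_at_top[of 3] by eventually_elim (simp add: ln_powr_fun_def)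

lemma filterlim_ln_powr_fun_at_top:
  assumes "0 < b"
  shows "filterlim (ln_powr_fun b) at_top at_top"
proof -
  have "filterlim (\<lambda>y. ln y powr b) at_top at_top" using assms by real_asymp
  then have "filterlim (\<lambda>x. ln (real_of_int x) powr b) at_top at_top"
    using filterlim_compose filterlim_real_of_int_at_top by blast
  then show ?thesis
    using filterlim_cong[OF refl refl eventually_ln_powr_fun_eq] by blast
qed

lemma tendsto_ln_powr_fun_zero:
  assumes "b < 0"
  shows "(ln_powr_fun b \<longlongrightarrow> 0) at_top"
proof -
  have "((\<lambda>y. ln y powr b) \<longlongrightarrow> 0) at_top" using assms by real_asymp
  then have "((\<lambda>x. ln (real_of_int x) powr b) \<longlongrightarrow> 0) at_top"
    using filterlim_compose filterlim_real_of_int_at_top by blast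
  then show ?thesis
    using filterlim_cong[OF refl refl eventually_ln_powr_fun_eq] by blast
qed

lemma Limsup_le_neg_Liminf:
  fixes g W :: "'a \<Rightarrow> real"
  assumes "F \<noteq> bot" and "0 \<le> c" and "eventually (\<lambda>x. g x \<le> - (c * W x)) F"
  shows "Limsup F (\<lambda>x. ereal (g x)) \<le> - ereal c * Liminf F (\<lambda>x. ereal (W x))"
proof -
  have "Limsup F (\<lambda>x. ereal (g x)) \<le> Limsup F (\<lambda>x. - (ereal c * ereal (W x)))"
    using assms(3) by (intro Limsup_mono) (auto elim: eventually_mono)
  also have "\<dots> = - Liminf F (\<lambda>x. ereal c * ereal (W x))"
    by (rule ereal_Limsup_uminus)
  also have "\<dots> = - (ereal c * Liminf F (\<lambda>x. ereal (W x)))"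
    by (subst Liminf_ereal_mult_left[OF assms(1,2)]) (rule refl)
  finally show ?thesis by (simp only: ereal_mult_minus_left)
qed

lemma ln_powr_fun_Lyapunov:
  assumes ct: "ctmc_rates S Gam lam" and b: "\<bar>b\<bar> \<le> 1" "b \<noteq> 0"
    and H: "eventually (\<lambda>x. b * (HH Gam lam 1 x - 1) \<le> - 4 * b^2) (along S)"
  defines "W \<equiv> \<lambda>x. vv Gam lam x / ((real_of_int x)^2 * ln (real_of_int x) powr (2 - b))"
  shows "eventually (\<lambda>x. gen Gam lam (ln_powr_fun b) x < 0) (along S)
         \<and> Limsup (along S) (\<lambda>x. ereal (gen Gam lam (ln_powr_fun b) x))
             \<le> - ereal (b^2) * Liminf (along S) (\<lambda>x. ereal (W x))
         \<and> - ereal (b^2) * Liminf (along S) (\<lambda>x. ereal (W x)) \<le> 0"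
proof (intro conjI)
  let ?K = "jump_bound Gam"
  have large: "eventually (\<lambda>x. 2 * ?K + 3 \<le> real_of_int x \<and>
                  38 * ?K * ln (real_of_int x) ^ 3 \<le> \<bar>b\<bar> * real_of_int x) (along S)"
  proof -
    have "eventually (\<lambda>x::int. ln (real_of_int x) ^ 3 \<le> \<bar>b\<bar> / (38 * ?K) * real_of_int x) at_top"
      using b(2) one_le_jump_bound[of Gam] by (intro eventually_ln_cube_le) simp
    then have "eventually (\<lambda>x. 2 * ?K + 3 \<le> real_of_int x \<and>
                  38 * ?K * ln (real_of_int x) ^ 3 \<le> \<bar>b\<bar> * real_of_int x) at_top"
      using eventually_ge_real_of_int[of "2 * ?K + 3"]
      by eventually_elim (use one_le_jump_bound[of Gam] in \<open>simp add: field_simps\<close>)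
    then show ?thesis using filter_leD[OF along_le_at_top] by blast
  qed
  have bound: "eventually (\<lambda>x. gen Gam lam (ln_powr_fun b) x \<le> - 2 * b^2 * W x \<and> 0 < W x) (along S)"
    using H large eventually_in_along
  proof eventually_elim
    case (elim x)
    then have "1 < real_of_int x" using one_le_jump_bound[of Gam] by linarith
    then have "0 < W x" using vv_pos[OF ct \<open>x \<in> S\<close>] by (simp add: W_def)
    then show ?case
      using elim gen_ln_powr_fun_le_neg[OF ct b(1)] by (simp add: W_def)
  qed
  then have bound': "eventually (\<lambda>x. gen Gam lam (ln_powr_fun b) x \<le> - 2 * (b^2 * W x)
                                      \<and> 0 < b^2 * W x) (along S)"
    by eventually_elim (use b(2) in simp)
  then show "eventually (\<lambda>x. gen Gam lam (ln_powr_fun b) x < 0) (along S)"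
    by eventually_elim linarith
  have "along S \<noteq> bot"
    using ct unfolding ctmc_rates_def by (intro along_neq_bot) auto
  moreover have "eventually (\<lambda>x. gen Gam lam (ln_powr_fun b) x \<le> - (b^2 * W x)) (along S)"
    using bound' by eventually_elim linarith
  ultimately show "Limsup (along S) (\<lambda>x. ereal (gen Gam lam (ln_powr_fun b) x))
                   \<le> - ereal (b^2) * Liminf (along S) (\<lambda>x. ereal (W x))"
    by (intro Limsup_le_neg_Liminf) auto
  have "0 \<le> Liminf (along S) (\<lambda>x. ereal (W x))"
    using bound by (intro Liminf_bounded) (auto elim: eventually_mono)
  then show "- ereal (b^2) * Liminf (along S) (\<lambda>x. ereal (W x)) \<le> 0"
    by (simp only: ereal_mult_minus_left) simp
qed

lemma Limsup_HH_less_one_Lyapunov: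
  assumes ct: "ctmc_rates S Gam lam" and "Limsup (along S) (\<lambda>x. ereal (HH Gam lam 1 x)) < 1"
  shows "\<exists>f :: int \<Rightarrow> real. \<exists>\<epsilon> :: real. \<epsilon> > 0 \<and> (\<forall>x\<in>S. f x > 0) \<and>
           filterlim f at_top (along S) \<and>
           eventually (\<lambda>x. gen Gam lam f x < 0) (along S) \<and>
           Limsup (along S) (\<lambda>x. ereal (gen Gam lam f x))
             \<le> - ereal ((\<epsilon>/2)^2) * Liminf (along S)
                  (\<lambda>x. ereal (vv Gam lam x / ((real_of_int x)^2 * ln (real_of_int x) powr (2 - \<epsilon>/2)))) \<and>
           - ereal ((\<epsilon>/2)^2) * Liminf (along S)
                  (\<lambda>x. ereal (vv Gam lam x / ((real_of_int x)^2 * ln (real_of_int x) powr (2 - \<epsilon>/2)))) \<le> 0"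
proof -
  obtain z where z: "Limsup (along S) (\<lambda>x. ereal (HH Gam lam 1 x)) < ereal z" "ereal z < 1"
    using ereal_dense2[OF assms(2)] by blast
  define a where "a = min 1 (1 - z) / 4"
  have a: "0 < a" "a \<le> 1" "z \<le> 1 - 4 * a" using z unfolding a_def by auto
  have "eventually (\<lambda>x. HH Gam lam 1 x < z) (along S)"
    using Limsup_lessD[OF z(1)] by simp
  then have "eventually (\<lambda>x. a * (HH Gam lam 1 x - 1) \<le> - 4 * a^2) (along S)"
  proof eventually_elim
    case (elim x)
    then have "a * (HH Gam lam 1 x - 1) \<le> a * (- 4 * a)"
      using a by (intro mult_left_mono) auto
    then show ?case by (simp add: power2_eq_square)
  qed
  moreover have "filterlim (ln_powr_fun a) at_top (along S)"
    using filterlim_ln_powr_fun_at_top[OF a(1)] filterlim_mono[OF _ order_refl along_le_at_top] by blast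
  ultimately show ?thesis
    using ln_powr_fun_Lyapunov[OF ct, of a] a ln_powr_fun_pos[of a]
    by (intro exI[of _ "ln_powr_fun a"] exI[of _ "2 * a"]) simp
qed

lemma Liminf_HH_greater_one_Lyapunov:
  assumes ct: "ctmc_rates S Gam lam" and "Liminf (along S) (\<lambda>x. ereal (HH Gam lam 1 x)) > 1"
  shows "\<exists>f :: int \<Rightarrow> real. \<exists>\<epsilon> :: real. \<epsilon> > 0 \<and> (\<forall>x\<in>S. f x > 0) \<and>
           (f \<longlongrightarrow> 0) (along S) \<and>
           eventually (\<lambda>x. gen Gam lam f x < 0) (along S) \<and>
           Limsup (along S) (\<lambda>x. ereal (gen Gam lam f x))
             \<le> - ereal ((\<epsilon>/2)^2) * Liminf (along S)
                  (\<lambda>x. ereal (vv Gam lam x / ((real_of_int x)^2 * ln (real_of_int x) powr (2 + \<epsilon>/2)))) \<and>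
           - ereal ((\<epsilon>/2)^2) * Liminf (along S)
                  (\<lambda>x. ereal (vv Gam lam x / ((real_of_int x)^2 * ln (real_of_int x) powr (2 + \<epsilon>/2)))) \<le> 0"
proof -
  obtain z where z: "1 < ereal z" "ereal z < Liminf (along S) (\<lambda>x. ereal (HH Gam lam 1 x))"
    using ereal_dense2[OF assms(2)] by blast
  define a where "a = min 1 (z - 1) / 4"
  have a: "0 < a" "a \<le> 1" "1 + 4 * a \<le> z" using z unfolding a_def by auto
  have "eventually (\<lambda>x. z < HH Gam lam 1 x) (along S)"
    using less_LiminfD[OF z(2)] by simp
  then have "eventually (\<lambda>x. - a * (HH Gam lam 1 x - 1) \<le> - 4 * (- a)^2) (along S)"
  proof eventually_elim
    case (elim x)
    then have "a * (4 * a) \<le> a * (HH Gam lam 1 x - 1)"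
      using a by (intro mult_left_mono) auto
    then show ?case by (simp add: power2_eq_square)
  qed
  moreover have "(ln_powr_fun (- a) \<longlongrightarrow> 0) (along S)"
    using tendsto_ln_powr_fun_zero[of "- a"] a(1) tendsto_mono[OF along_le_at_top] by simp
  ultimately show ?thesis
    using ln_powr_fun_Lyapunov[OF ct, of "- a"] a ln_powr_fun_pos[of "- a"]
    by (intro exI[of _ "ln_powr_fun (- a)"] exI[of _ "2 * a"]) simp
qed

theorem mainTheorem2:
  fixes S Gam :: "int set" and lam :: "int \<Rightarrow> int \<Rightarrow> real"
  assumes "ctmc_rates S Gam lam"
  shows
   "(Limsup (along S) (\<lambda>x. ereal (HH Gam lam 1 x)) < 1 \<longrightarrow>
      (\<exists>f :: int \<Rightarrow> real. \<exists>\<epsilon> :: real. \<epsilon> > 0 \<and> (\<forall>x\<in>S. f x > 0) \<and>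
         filterlim f at_top (along S) \<and>
         eventually (\<lambda>x. gen Gam lam f x < 0) (along S) \<and>
         Limsup (along S) (\<lambda>x. ereal (gen Gam lam f x))
           \<le> - ereal ((\<epsilon>/2)^2) * Liminf (along S)
                (\<lambda>x. ereal (vv Gam lam x / ((real_of_int x)^2 * ln (real_of_int x) powr (2 - \<epsilon>/2)))) \<and>
         - ereal ((\<epsilon>/2)^2) * Liminf (along S)
                (\<lambda>x. ereal (vv Gam lam x / ((real_of_int x)^2 * ln (real_of_int x) powr (2 - \<epsilon>/2)))) \<le> 0))
    \<and>
    (Liminf (along S) (\<lambda>x. ereal (HH Gam lam 1 x)) > 1 \<longrightarrow>
      (\<exists>f :: int \<Rightarrow> real. \<exists>\<epsilon> :: real. \<epsilon> > 0 \<and> (\<forall>x\<in>S. f x > 0) \<and>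
         (f \<longlongrightarrow> 0) (along S) \<and>
         eventually (\<lambda>x. gen Gam lam f x < 0) (along S) \<and>
         Limsup (along S) (\<lambda>x. ereal (gen Gam lam f x))
           \<le> - ereal ((\<epsilon>/2)^2) * Liminf (along S)
                (\<lambda>x. ereal (vv Gam lam x / ((real_of_int x)^2 * ln (real_of_int x) powr (2 + \<epsilon>/2)))) \<and>
         - ereal ((\<epsilon>/2)^2) * Liminf (along S)
                (\<lambda>x. ereal (vv Gam lam x / ((real_of_int x)^2 * ln (real_of_int x) powr (2 + \<epsilon>/2)))) \<le> 0))"
  using Limsup_HH_less_one_Lyapunov[OF assms] Liminf_HH_greater_one_Lyapunov[OF assms] by blast

end
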